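(* Consider the redundancy system with scaled Bernoulli service requirements and its auxiliary system, both as described in the context, driven by the same arrivals and the same replica service requirement draws, and started in the same initial workload state $\tilde{\boldsymbol{\omega}}$ with $\tilde\omega_{(1)}=\dots=\tilde\omega_{(d)}$, i.e. $\tilde{\boldsymbol{\omega}}(0)=\boldsymbol{\omega}(0)=\tilde{\boldsymbol{\omega}}$. Then for all $t\ge 0$ and all $i=1,\dots,N$, $$\tilde\omega_{(1)}(t)-\tilde\omega_{(i)}(t)\ \ge\ \omega_{(1)}(t)-\omega_{(i)}(t).$$
   Context: Original system: $N$ parallel servers; jobs arrive according to a Poisson process of rate $\lambda$. Each arriving job is replicated into $d$ replicas ($1\le d\le N$), sent to $d$ distinct servers chosen uniformly at random without replacement. Replicas are served FCFS at each server; a job completes as soon as its first replica completes, and the other replicas are then instantaneously abandoned. Replica service requirements are i.i.d. copies of $B$, where $B=XK$ with probability $1-p$ and $B=0$ with probability $p$; here $K\ge1$ is a fixed real number, $X$ is a strictly positive random variable with $\mathbb{E}[X]=1$, and $p=1-1/K$ (so $\mathbb{E}[B]=1$). The workload $\omega_i$ of server $i$ is the real amount of work it must do to become idle absent further arrivals; between arrivals positive workloads decrease at unit rate. If a job arrives with sampled servers $s_1,\dots,s_d$ and replica requirements $b_1,\dots,b_d$, the new workload at $s_l$ is $\max\{\min_j(\omega_{s_j}+b_j),\omega_{s_l}\}$, other servers unchanged. $\omega_{(1)}\ge\dots\ge\omega_{(N)}$ denote the ordered workloads. The system is in synchronicity when all $N$ workloads are equal. A job is of type $A$ if none of its $d$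 replicas has requirement $0$ (its requirements are then $X_1K,\dots,X_dK$ with $X_j$ i.i.d. copies of $X$), of type $B$ if between $1$ and $d-1$ of its replicas have requirement $0$, and of type $C$ if all replicas have requirement $0$. A type-$B_1$ job is one whose $d-1$ replicas, at least one of which has requirement $0$, are allocated to the $d-1$ servers with the largest workloads (first $d-1$ ordered servers), and whose remaining replica, with requirement $X_dK$, is allocated to the server with the smallest workload (the $N$-th ordered server). Auxiliary system (workloads $\tilde{\boldsymbol{\omega}}(t)$): identical to the original system, driven by the same arrivals and service requirement draws, except that (i) workloads decrease over time only while the auxiliary system is in synchronicity (otherwise they stay constant between arrivals), (ii) every type-$A$ job is allocated to the $d$ servers with the largest workloads (first $d$ ordered servers) instead of to $d$ random servers, and (iii) among type-$B$ jobs only type-$B_1$ jobs are taken into account; the other type-$B$ jobs are omitted. *)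

theory Defs
  imports Complex_Main
begin

text \<open>Servers are numbered 0,...,N-1; a workload state is a function from server
  indices to reals (values at indices >= N are irrelevant).  Ranks are 0-indexed
  internally: rank 0 is the server with the largest workload.\<close>

type_synonym state = "nat \<Rightarrow> real"

text \<open>Ordered workloads, 1-indexed as in the paper: ord_wl N w 1 is the largest,
  ord_wl N w N the smallest.\<close>
definition ord_wl :: "nat \<Rightarrow> state \<Rightarrow> nat \<Rightarrow> real" where
  "ord_wl N w i = rev (sort (map w [0..<N])) ! (i - 1)"

definition sorts :: "nat \<Rightarrow> state \<Rightarrow> (nat \<Rightarrow> nat) \<Rightarrow> bool" where
  "sorts N w \<sigma> \<longleftrightarrow> bij_betw \<sigma> {..<N} {..<N} \<and>
     (\<forall>i j. i \<le> j \<and> j < N \<longrightarrow> w (\<sigma> j) \<le> w (\<sigma> i))"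

definition in_sync :: "nat \<Rightarrow> state \<Rightarrow> bool" where
  "in_sync N w \<longleftrightarrow> (\<forall>k<N. w k = w 0)"

definition drain :: "real \<Rightarrow> state \<Rightarrow> state" where
  "drain s w = (\<lambda>k. max (w k - s) 0)"

definition aux_drain :: "nat \<Rightarrow> real \<Rightarrow> state \<Rightarrow> state" where
  "aux_drain N s w = (if in_sync N w then drain s w else w)"

definition job_update :: "nat \<Rightarrow> (nat \<Rightarrow> nat) \<Rightarrow> (nat \<Rightarrow> real) \<Rightarrow> state \<Rightarrow> state" where
  "job_update d srv b w =
     (let M = Min ((\<lambda>j. w (srv j) + b j) ` {..<d})
      in (\<lambda>k. if k \<in> srv ` {..<d} then max M (w k) else w k))"

text \<open>Service requirement of replica j of job n: z n j says it is a zero draw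
  (probability p), otherwise it is X K with X = x n j.\<close>
definition req :: "real \<Rightarrow> (nat \<Rightarrow> nat \<Rightarrow> bool) \<Rightarrow> (nat \<Rightarrow> nat \<Rightarrow> real) \<Rightarrow> nat \<Rightarrow> nat \<Rightarrow> real" where
  "req K z x n j = (if z n j then 0 else x n j * K)"

definition typeA :: "nat \<Rightarrow> (nat \<Rightarrow> nat \<Rightarrow> bool) \<Rightarrow> nat \<Rightarrow> bool" where
  "typeA d z n \<longleftrightarrow> (\<forall>j<d. \<not> z n j)"

definition typeC :: "nat \<Rightarrow> (nat \<Rightarrow> nat \<Rightarrow> bool) \<Rightarrow> nat \<Rightarrow> bool" where
  "typeC d z n \<longleftrightarrow> (\<forall>j<d. z n j)"

definition typeB :: "nat \<Rightarrow> (nat \<Rightarrow> nat \<Rightarrow> bool) \<Rightarrow> nat \<Rightarrow> bool" where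
  "typeB d z n \<longleftrightarrow> \<not> typeA d z n \<and> \<not> typeC d z n"

text \<open>r n j is the rank position (0 = largest workload) to which replica j of job n is
  sent.  Type B1: the replicas go to the top d-1 ranks and to the bottom rank N-1, the
  replica at the bottom rank has nonzero requirement (so, the job being of type B, at
  least one of the other d-1 replicas has requirement 0).\<close>
definition typeB1 :: "nat \<Rightarrow> nat \<Rightarrow> (nat \<Rightarrow> nat \<Rightarrow> bool) \<Rightarrow> (nat \<Rightarrow> nat \<Rightarrow> nat) \<Rightarrow> nat \<Rightarrow> bool" where
  "typeB1 N d z r n \<longleftrightarrow> typeB d z n \<and> r n ` {..<d} = insert (N - 1) {..<d - 1} \<and>
     (\<forall>j<d. r n j = N - 1 \<longrightarrow> \<not> z n j)"

text \<open>Jump maps: job index n, rank-to-server map sigma of the current state, state.\<close>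
definition orig_jump :: "nat \<Rightarrow> real \<Rightarrow> (nat \<Rightarrow> nat \<Rightarrow> bool) \<Rightarrow> (nat \<Rightarrow> nat \<Rightarrow> real) \<Rightarrow>
    (nat \<Rightarrow> nat \<Rightarrow> nat) \<Rightarrow> nat \<Rightarrow> (nat \<Rightarrow> nat) \<Rightarrow> state \<Rightarrow> state" where
  "orig_jump d K z x r n \<sigma> w = job_update d (\<lambda>j. \<sigma> (r n j)) (req K z x n) w"

definition aux_jump :: "nat \<Rightarrow> nat \<Rightarrow> real \<Rightarrow> (nat \<Rightarrow> nat \<Rightarrow> bool) \<Rightarrow> (nat \<Rightarrow> nat \<Rightarrow> real) \<Rightarrow>
    (nat \<Rightarrow> nat \<Rightarrow> nat) \<Rightarrow> nat \<Rightarrow> (nat \<Rightarrow> nat) \<Rightarrow> state \<Rightarrow> state" where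
  "aux_jump N d K z x r n \<sigma> w =
     (if typeA d z n then job_update d (\<lambda>j. \<sigma> j) (req K z x n) w
      else if typeB1 N d z r n \<or> typeC d z n then job_update d (\<lambda>j. \<sigma> (r n j)) (req K z x n) w
      else w)"

text \<open>Generic piecewise-deterministic trajectory: flow fl between arrivals, jump jp at
  arrival times T 0 < T 1 < ...; post n is the state right after the n-th arrival,
  pre n the state right before it.\<close>
fun post :: "(real \<Rightarrow> state \<Rightarrow> state) \<Rightarrow> (nat \<Rightarrow> (nat \<Rightarrow> nat) \<Rightarrow> state \<Rightarrow> state) \<Rightarrow>
    (nat \<Rightarrow> real) \<Rightarrow> (nat \<Rightarrow> nat \<Rightarrow> nat) \<Rightarrow> state \<Rightarrow> nat \<Rightarrow> state" where
  "post fl jp T \<sigma> w0 0 = jp 0 (\<sigma> 0) (fl (T 0) w0)"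
| "post fl jp T \<sigma> w0 (Suc n) =
     jp (Suc n) (\<sigma> (Suc n)) (fl (T (Suc n) - T n) (post fl jp T \<sigma> w0 n))"

definition pre :: "(real \<Rightarrow> state \<Rightarrow> state) \<Rightarrow> (nat \<Rightarrow> (nat \<Rightarrow> nat) \<Rightarrow> state \<Rightarrow> state) \<Rightarrow>
    (nat \<Rightarrow> real) \<Rightarrow> (nat \<Rightarrow> nat \<Rightarrow> nat) \<Rightarrow> state \<Rightarrow> nat \<Rightarrow> state" where
  "pre fl jp T \<sigma> w0 n = (case n of 0 \<Rightarrow> fl (T 0) w0
      | Suc m \<Rightarrow> fl (T (Suc m) - T m) (post fl jp T \<sigma> w0 m))"

definition traj :: "(real \<Rightarrow> state \<Rightarrow> state) \<Rightarrow> (nat \<Rightarrow> (nat \<Rightarrow> nat) \<Rightarrow> state \<Rightarrow> state) \<Rightarrow>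
    (nat \<Rightarrow> real) \<Rightarrow> (nat \<Rightarrow> nat \<Rightarrow> nat) \<Rightarrow> state \<Rightarrow> real \<Rightarrow> state" where
  "traj fl jp T \<sigma> w0 t = (if t < T 0 then fl t w0
      else (let n = Max {n. T n \<le> t} in fl (t - T n) (post fl jp T \<sigma> w0 n)))"

end

theory Submission
  imports Defs "HOL-Library.Multiset"
begin

text \<open>The two systems stay coupled: every gap \<omega>_(1) - \<omega>_(i) of the original system is
  at most the corresponding gap of the auxiliary system, and the d largest auxiliary
  workloads are equal.  Draining only shrinks the original gaps, while the auxiliary system
  is either frozen or synchronized.  A type-A job raises the d equal top auxiliary
  workloads by its smallest requirement, which bounds the growth of the original \<omega>_(1).
  A type-B job other than B1 is ignored by the auxiliary system and cannot raise the
  original \<omega>_(1), since one of its replicas completes at once.  A type-B1 job lifts the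
  smallest workload of both systems to min \<omega>_(1) (\<omega>_(N) + X_d K), and the coupling
  survives because it amounts to comparing, level by level, the numbers of servers above a
  level.  Type-C jobs change nothing.\<close>

definition count_ge :: "nat \<Rightarrow> state \<Rightarrow> real \<Rightarrow> nat" where
  "count_ge N w v = card {k. k < N \<and> v \<le> w k}"

lemma le_ord_wl_iff_count_ge:
  assumes "1 \<le> i" "i \<le> N"
  shows "v \<le> ord_wl N w i \<longleftrightarrow> i \<le> count_ge N w v"
proof -
  define xs where "xs = rev (sort (map w [0..<N]))"
  have len: "length xs = N" by (simp add: xs_def)
  have sorted: "xs ! b \<le> xs ! a" if "a \<le> b" "b < N" for a b
    using sorted_rev_nth_mono[of xs a b] that len by (simp add: xs_def)
  have "length (filter (\<lambda>y. v \<le> y) xs) = length (filter (\<lambda>y. v \<le> y) (map w [0..<N]))"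
    by (metis xs_def mset_filter size_mset mset_rev mset_sort)
  moreover have "{j. j < N \<and> v \<le> map w [0..<N] ! j} = {k. k < N \<and> v \<le> w k}" by auto
  ultimately have count: "count_ge N w v = card {j. j < N \<and> v \<le> xs ! j}"
    unfolding count_ge_def length_filter_conv_card len by simp
  have ord: "ord_wl N w i = xs ! (i - 1)" by (simp add: ord_wl_def xs_def)
  show ?thesis
  proof
    assume "v \<le> ord_wl N w i"
    then have "j \<in> {j. j < N \<and> v \<le> xs ! j}" if "j < i" for j
      using that ord sorted[of j "i - 1"] assms by force
    then have "{..<i} \<subseteq> {j. j < N \<and> v \<le> xs ! j}" by blast
    from card_mono[OF _ this] show "i \<le> count_ge N w v" unfolding count by simp
  next
    assume i: "i \<le> count_ge N w v"
    show "v \<le> ord_wl N w i"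
    proof (rule ccontr)
      assume "\<not> v \<le> ord_wl N w i"
      then have "j < i - 1" if "j < N" "v \<le> xs ! j" for j
        using that ord sorted[of "i - 1" j] assms by (cases "j < i - 1") auto
      then have "{j. j < N \<and> v \<le> xs ! j} \<subseteq> {..<i - 1}" by blast
      from card_mono[OF _ this] have "count_ge N w v \<le> i - 1" unfolding count by simp
      with i assms show False by simp
    qed
  qed
qed

lemma count_ge_le: "count_ge N w v \<le> N"
  unfolding count_ge_def by (rule order_trans[OF card_mono[of "{..<N}"]]) auto

lemma ord_wl_attained:
  assumes "1 \<le> i" "i \<le> N"
  shows "\<exists>k<N. ord_wl N w i = w k"
proof -
  have "rev (sort (map w [0..<N])) ! (i - 1) \<in> set (rev (sort (map w [0..<N])))"
    using assms by (intro nth_mem) simp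
  then show ?thesis by (auto simp: ord_wl_def)
qed

lemma ord_wl_antimono:
  assumes "1 \<le> i" "i \<le> j" "j \<le> N"
  shows "ord_wl N w j \<le> ord_wl N w i"
  using le_ord_wl_iff_count_ge[of j N "ord_wl N w j" w]
    le_ord_wl_iff_count_ge[of i N "ord_wl N w j" w] assms by simp

lemma le_ord_wl_1:
  assumes "k < N"
  shows "w k \<le> ord_wl N w 1"
proof -
  have "k \<in> {j. j < N \<and> w k \<le> w j}" using assms by simp
  then have "0 < count_ge N w (w k)" unfolding count_ge_def
    by (intro card_gt_0_iff[THEN iffD2]) auto
  then show ?thesis using le_ord_wl_iff_count_ge[of 1 N "w k" w] assms by simp
qed

lemma ord_wl_N_le:
  assumes "k < N"
  shows "ord_wl N w N \<le> w k"
proof (rule ccontr)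
  assume "\<not> ord_wl N w N \<le> w k"
  then have "{j. j < N \<and> ord_wl N w N \<le> w j} \<subseteq> {..<N} - {k}" by auto
  from card_mono[OF _ this] have "count_ge N w (ord_wl N w N) \<le> N - 1"
    using assms by (simp add: count_ge_def)
  moreover have "N \<le> count_ge N w (ord_wl N w N)"
    using le_ord_wl_iff_count_ge[of N N "ord_wl N w N" w] assms by simp
  ultimately show False using assms by simp
qed

lemma ord_wl_le_bound:
  assumes "\<forall>k<N. w k \<le> c" "1 \<le> i" "i \<le> N"
  shows "ord_wl N w i \<le> c"
  using ord_wl_attained[OF assms(2,3), of w] assms(1) by auto

lemma ord_wl_mono:
  assumes "\<forall>k<N. w k \<le> w' k" "1 \<le> i" "i \<le> N"
  shows "ord_wl N w i \<le> ord_wl N w' i"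
proof -
  let ?v = "ord_wl N w i"
  have "{k. k < N \<and> ?v \<le> w k} \<subseteq> {k. k < N \<and> ?v \<le> w' k}" using assms(1) by force
  from card_mono[OF _ this] have "count_ge N w ?v \<le> count_ge N w' ?v" by (simp add: count_ge_def)
  then show ?thesis
    using le_ord_wl_iff_count_ge[of i N ?v w] le_ord_wl_iff_count_ge[of i N ?v w'] assms by simp
qed

lemma ord_wl_sorts:
  assumes s: "sorts N w \<sigma>" and i: "i < N"
  shows "ord_wl N w (Suc i) = w (\<sigma> i)"
proof -
  have bij: "bij_betw \<sigma> {..<N} {..<N}"
    and anti: "\<And>a b. a \<le> b \<Longrightarrow> b < N \<Longrightarrow> w (\<sigma> b) \<le> w (\<sigma> a)"
    using s by (auto simp: sorts_def)
  have "sort (map w [0..<N]) = rev (map (w \<circ> \<sigma>) [0..<N])"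
  proof (rule properties_for_sort)
    have "image_mset \<sigma> (mset_set {..<N}) = mset_set {..<N}"
      using bij by (simp add: image_mset_mset_set bij_betw_def)
    then show "mset (rev (map (w \<circ> \<sigma>) [0..<N])) = mset (map w [0..<N])"
      by (simp add: atLeast0LessThan flip: image_mset.comp)
    show "sorted (rev (map (w \<circ> \<sigma>) [0..<N]))"
      unfolding sorted_rev_iff_nth_mono using anti by simp
  qed
  then show ?thesis using i by (simp add: ord_wl_def)
qed

lemma sorts_last:
  assumes "sorts N w \<sigma>" "1 \<le> N"
  shows "\<sigma> (N - 1) < N" "w (\<sigma> (N - 1)) = ord_wl N w N"
  using assms ord_wl_sorts[OF assms(1), of "N - 1"] unfolding sorts_def bij_betw_def by auto

lemma ord_wl_comp_mono:
  assumes "mono f" "1 \<le> i" "i \<le> N"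
  shows "ord_wl N (\<lambda>k. f (w k)) i = f (ord_wl N w i)"
proof -
  have "sort (map f (map w [0..<N])) = map f (sort (map w [0..<N]))"
  proof (rule properties_for_sort)
    show "mset (map f (sort (map w [0..<N]))) = mset (map f (map w [0..<N]))"
      by (metis mset_map mset_sort)
    show "sorted (map f (sort (map w [0..<N])))"
      by (rule sorted_map_mono) (use assms(1) in \<open>auto simp: mono_on_def mono_def\<close>)
  qed
  then have "rev (sort (map (\<lambda>k. f (w k)) [0..<N])) = map f (rev (sort (map w [0..<N])))"
    by (simp add: rev_map comp_def)
  then show ?thesis using assms by (simp add: ord_wl_def)
qed

lemma ord_wl_drain:
  assumes "1 \<le> i" "i \<le> N"
  shows "ord_wl N (drain s w) i = max (ord_wl N w i - s) 0"
proof -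
  have "mono (\<lambda>y::real. max (y - s) 0)" by (auto simp: mono_def)
  from ord_wl_comp_mono[OF this assms] show ?thesis unfolding drain_def .
qed

lemma ord_wl_in_sync:
  assumes "in_sync N w" "1 \<le> i" "i \<le> N"
  shows "ord_wl N w i = ord_wl N w 1"
proof -
  obtain k where "k < N" "ord_wl N w i = w k" using ord_wl_attained[OF assms(2,3)] by blast
  moreover obtain k' where "k' < N" "ord_wl N w 1 = w k'" using ord_wl_attained[of 1 N w] assms
    by auto
  ultimately show ?thesis using assms(1) unfolding in_sync_def by metis
qed

lemma count_ge_fun_upd:
  assumes "p < N"
  shows "count_ge N (w(p := y)) v + (if v \<le> w p then 1 else 0)
       = count_ge N w v + (if v \<le> y then 1 else 0)"
proof -
  define S where "S = {k. k < N \<and> v \<le> w k}"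
  define S' where "S' = {k. k < N \<and> v \<le> (w(p := y)) k}"
  have "S' - {p} = S - {p}" by (auto simp: S_def S'_def)
  moreover have "card S = card (S - {p}) + (if v \<le> w p then 1 else 0)"
  proof (cases "p \<in> S")
    case True then show ?thesis using card.remove[of S p] by (simp add: S_def)
  qed (use assms in \<open>simp add: S_def\<close>)
  moreover have "card S' = card (S' - {p}) + (if v \<le> y then 1 else 0)"
  proof (cases "p \<in> S'")
    case True then show ?thesis using card.remove[of S' p] by (simp add: S'_def)
  qed (use assms in \<open>simp add: S'_def\<close>)
  ultimately show ?thesis unfolding count_ge_def S_def[symmetric] S'_def[symmetric] by simp
qed

lemma ord_wl_shift_le_iff_count_ge:
  "(\<forall>i. 1 \<le> i \<and> i \<le> N \<longrightarrow> ord_wl N w' i - \<delta> \<le> ord_wl N w i)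
   \<longleftrightarrow> (\<forall>v. count_ge N w' (v + \<delta>) \<le> count_ge N w v)"
proof safe
  fix v assume dom: "\<forall>i. 1 \<le> i \<and> i \<le> N \<longrightarrow> ord_wl N w' i - \<delta> \<le> ord_wl N w i"
  show "count_ge N w' (v + \<delta>) \<le> count_ge N w v"
  proof (cases "count_ge N w' (v + \<delta>) = 0")
    case False
    let ?m = "count_ge N w' (v + \<delta>)"
    have m: "1 \<le> ?m" "?m \<le> N" using False count_ge_le[of N w'] by auto
    have "v + \<delta> \<le> ord_wl N w' ?m" using le_ord_wl_iff_count_ge[OF m] by simp
    then have "v \<le> ord_wl N w ?m" using dom m by force
    then show ?thesis using le_ord_wl_iff_count_ge[OF m] by simp
  qed simp
next
  fix i assume count: "\<forall>v. count_ge N w' (v + \<delta>) \<le> count_ge N w v" and i: "1 \<le> i" "i \<le> N"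
  have "i \<le> count_ge N w' (ord_wl N w' i)"
    using le_ord_wl_iff_count_ge[OF i, of "ord_wl N w' i" w'] by simp
  also have "\<dots> \<le> count_ge N w (ord_wl N w' i - \<delta>)"
    using count[rule_format, of "ord_wl N w' i - \<delta>"] by simp
  finally show "ord_wl N w' i - \<delta> \<le> ord_wl N w i" using le_ord_wl_iff_count_ge[OF i] by simp
qed

definition gaps_le :: "nat \<Rightarrow> state \<Rightarrow> state \<Rightarrow> bool" where
  "gaps_le N w w' \<longleftrightarrow> (\<forall>i. 1 \<le> i \<and> i \<le> N \<longrightarrow>
     ord_wl N w 1 - ord_wl N w i \<le> ord_wl N w' 1 - ord_wl N w' i)"

definition top_equal :: "nat \<Rightarrow> nat \<Rightarrow> state \<Rightarrow> bool" where
  "top_equal N d w \<longleftrightarrow> (\<forall>i. 1 \<le> i \<and> i \<le> d \<longrightarrow> ord_wl N w i = ord_wl N w 1)"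

definition coupled :: "nat \<Rightarrow> nat \<Rightarrow> state \<Rightarrow> state \<Rightarrow> bool" where
  "coupled N d w w' \<longleftrightarrow> gaps_le N w w' \<and> top_equal N d w'"

lemma gaps_le_iff_count_ge:
  "gaps_le N w w' \<longleftrightarrow>
     (\<forall>v. count_ge N w' (v + (ord_wl N w' 1 - ord_wl N w 1)) \<le> count_ge N w v)"
  unfolding gaps_le_def ord_wl_shift_le_iff_count_ge[symmetric] by (simp add: algebra_simps)

lemma top_equalD:
  "top_equal N d w \<Longrightarrow> 1 \<le> i \<Longrightarrow> i \<le> d \<Longrightarrow> ord_wl N w i = ord_wl N w 1"
  unfolding top_equal_def by blast

lemma sorts_top_equal:
  assumes "sorts N w \<sigma>" "top_equal N d w" "j < d" "d \<le> N"
  shows "w (\<sigma> j) = ord_wl N w 1"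
  using ord_wl_sorts[OF assms(1), of j] top_equalD[OF assms(2), of "Suc j"] assms(3,4) by simp

lemma top_equal_if_gaps_le:
  assumes "gaps_le N w w'" "top_equal N d w'" "d \<le> N"
  shows "top_equal N d w"
  unfolding top_equal_def
proof safe
  fix i assume i: "1 \<le> i" "i \<le> d"
  with assms(3) have iN: "i \<le> N" by simp
  have "ord_wl N w 1 - ord_wl N w i \<le> ord_wl N w' 1 - ord_wl N w' i"
    using assms(1) i(1) iN unfolding gaps_le_def by blast
  moreover have "ord_wl N w' i = ord_wl N w' 1" using top_equalD[OF assms(2) i] .
  moreover have "ord_wl N w i \<le> ord_wl N w 1" using ord_wl_antimono[of 1 i N w] i(1) iN by simp
  ultimately show "ord_wl N w i = ord_wl N w 1" by linarith
qed

lemma top_equal_in_sync: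
  assumes "in_sync N w" "d \<le> N"
  shows "top_equal N d w"
  unfolding top_equal_def using ord_wl_in_sync[OF assms(1)] assms(2) by (blast intro: le_trans)

lemma in_sync_drain: "in_sync N w \<Longrightarrow> in_sync N (drain s w)"
  unfolding in_sync_def drain_def by metis

lemma gap_drain_le:
  assumes "1 \<le> i" "i \<le> N"
  shows "ord_wl N (drain s w) 1 - ord_wl N (drain s w) i \<le> ord_wl N w 1 - ord_wl N w i"
  using ord_wl_drain[OF assms] ord_wl_drain[of 1 N] ord_wl_antimono[of 1 i N w] assms by simp

lemma coupled_drain:
  assumes c: "coupled N d w w'" and d: "d \<le> N"
  shows "coupled N d (drain s w) (aux_drain N s w')"
proof (cases "in_sync N w'")
  case True
  have "gaps_le N (drain s w) (drain s w')" unfolding gaps_le_def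
  proof safe
    fix i assume i: "1 \<le> i" "i \<le> N"
    have "ord_wl N (drain s w) 1 - ord_wl N (drain s w) i \<le> ord_wl N w' 1 - ord_wl N w' i"
      using gap_drain_le[OF i, of s w] c i unfolding coupled_def gaps_le_def by (meson order_trans)
    then show "ord_wl N (drain s w) 1 - ord_wl N (drain s w) i
             \<le> ord_wl N (drain s w') 1 - ord_wl N (drain s w') i"
      using ord_wl_in_sync[OF True i] ord_wl_in_sync[OF in_sync_drain[OF True, of s] i] by linarith
  qed
  then show ?thesis
    using True top_equal_in_sync[OF in_sync_drain[OF True] d]
    by (simp add: coupled_def aux_drain_def)
next
  case False
  have "gaps_le N (drain s w) w'"
    using c gap_drain_le[of _ N s w] unfolding coupled_def gaps_le_def by (meson order_trans)
  then show ?thesis using False c by (simp add: coupled_def aux_drain_def)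
qed

lemma job_update_Min_le:
  "j < (d::nat) \<Longrightarrow> Min ((\<lambda>j. w (srv j) + b j) ` {..<d}) \<le> w (srv j) + b j"
  by (rule Min_le) simp_all

lemma job_update_in:
  "k \<in> srv ` {..<d} \<Longrightarrow>
     job_update d srv b w k = max (Min ((\<lambda>j. w (srv j) + b j) ` {..<d})) (w k)"
  by (simp add: job_update_def Let_def)

lemma job_update_notin: "k \<notin> srv ` {..<d} \<Longrightarrow> job_update d srv b w k = w k"
  by (simp add: job_update_def Let_def)

lemma job_update_ge: "w k \<le> job_update d srv b w k"
  by (cases "k \<in> srv ` {..<d}") (simp_all add: job_update_in job_update_notin)

lemma job_update_le_max:
  "job_update d srv b w k \<le> max (Min ((\<lambda>j. w (srv j) + b j) ` {..<d})) (w k)"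
  by (cases "k \<in> srv ` {..<d}") (simp_all add: job_update_in job_update_notin)

lemma job_update_zero_req:
  assumes "\<forall>j<d. b j = 0"
  shows "job_update d srv b w = w"
proof
  fix k
  show "job_update d srv b w k = w k"
  proof (cases "k \<in> srv ` {..<d}")
    case True
    then obtain j where "j < d" "k = srv j" by auto
    then have "Min ((\<lambda>j. w (srv j) + b j) ` {..<d}) \<le> w k"
      using job_update_Min_le[of j d w srv b] assms by simp
    then show ?thesis using job_update_in[OF True] by simp
  qed (simp add: job_update_notin)
qed

lemma ord_wl_job_update_ge:
  assumes "1 \<le> i" "i \<le> N"
  shows "ord_wl N w i \<le> ord_wl N (job_update d srv b w) i"
  using ord_wl_mono[OF _ assms] job_update_ge by blast

lemma ord_wl_1_job_update_zero_req:
  assumes "j0 < d" "b j0 = 0" "\<forall>j<d. srv j < N"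
  shows "ord_wl N (job_update d srv b w) 1 \<le> ord_wl N w 1"
proof (rule ord_wl_le_bound)
  have "Min ((\<lambda>j. w (srv j) + b j) ` {..<d}) \<le> ord_wl N w 1"
    using job_update_Min_le[OF assms(1), of w srv b] le_ord_wl_1[of "srv j0" N w] assms by simp
  then show "\<forall>k<N. job_update d srv b w k \<le> ord_wl N w 1"
    using job_update_le_max[of d srv b w] le_ord_wl_1[of _ N w]
    by (meson max.bounded_iff order_trans)
  show "1 \<le> N" using assms by fastforce
qed simp

lemma coupled_job_update_zero_req:
  assumes c: "coupled N d w w'" and j0: "j0 < d" "b j0 = 0" and srv: "\<forall>j<d. srv j < N"
  shows "coupled N d (job_update d srv b w) w'"
  unfolding coupled_def gaps_le_def
proof (intro conjI allI impI)
  fix i assume i: "1 \<le> i \<and> i \<le> N"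
  have "ord_wl N (job_update d srv b w) 1 \<le> ord_wl N w 1"
    using ord_wl_1_job_update_zero_req[of j0 d b srv N w] j0 srv by blast
  moreover have "ord_wl N w i \<le> ord_wl N (job_update d srv b w) i"
    using ord_wl_job_update_ge i by blast
  moreover have "ord_wl N w 1 - ord_wl N w i \<le> ord_wl N w' 1 - ord_wl N w' i"
    using c i unfolding coupled_def gaps_le_def by blast
  ultimately show "ord_wl N (job_update d srv b w) 1 - ord_wl N (job_update d srv b w) i
           \<le> ord_wl N w' 1 - ord_wl N w' i" by linarith
qed (use c in \<open>simp add: coupled_def\<close>)

lemma ord_wl_1_job_update_le:
  assumes d: "1 \<le> d" and b: "\<forall>j<d. 0 \<le> b j" and srv: "\<forall>j<d. srv j < N"
  shows "ord_wl N (job_update d srv b w) 1 \<le> ord_wl N w 1 + Min (b ` {..<d})"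
proof (rule ord_wl_le_bound)
  let ?m = "Min (b ` {..<d})"
  have "?m \<in> b ` {..<d}" using d by (intro Min_in) (auto simp: lessThan_empty_iff)
  then obtain js where js: "js < d" "b js = ?m" by auto
  then have m: "0 \<le> ?m" using b by metis
  have "Min ((\<lambda>j. w (srv j) + b j) ` {..<d}) \<le> ord_wl N w 1 + ?m"
    using job_update_Min_le[OF js(1), of w srv b] le_ord_wl_1[of "srv js" N w] srv js by simp
  moreover have "w k \<le> ord_wl N w 1 + ?m" if "k < N" for k
    using le_ord_wl_1[OF that, of w] m by simp
  ultimately show "\<forall>k<N. job_update d srv b w k \<le> ord_wl N w 1 + ?m"
    using job_update_le_max[of d srv b w] by (meson max.bounded_iff order_trans)
  show "1 \<le> N" using srv d by fastforce
qed simp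

lemma top_equal_job_update:
  assumes d: "1 \<le> d" "d \<le> N" and srv: "\<forall>j<d. srv j < N" "inj_on srv {..<d}"
    and top: "top_equal N d w"
  shows "top_equal N d (job_update d srv b w)"
proof -
  define w' where "w' = job_update d srv b w"
  define M where "M = Min ((\<lambda>j. w (srv j) + b j) ` {..<d})"
  define a where "a = ord_wl N w 1"
  have "\<forall>k<N. w' k \<le> max M a"
    using job_update_le_max[of d srv b w] le_ord_wl_1[of _ N w]
    unfolding w'_def M_def a_def by (meson max.mono order_trans order_refl)
  then have upper: "ord_wl N w' 1 \<le> max M a" using ord_wl_le_bound d by simp
  have lower: "max M a \<le> ord_wl N w' i" if i: "1 \<le> i" "i \<le> d" for i
  proof (cases "M \<le> a")
    case True
    have "ord_wl N w i \<le> ord_wl N w' i" using ord_wl_job_update_ge i d unfolding w'_def by simp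
    moreover have "ord_wl N w i = a" using top_equalD[OF top i] unfolding a_def .
    ultimately show ?thesis using True by simp
  next
    case False
    have "srv ` {..<d} \<subseteq> {k. k < N \<and> M \<le> w' k}"
      using job_update_in[of _ srv d b w] srv unfolding w'_def M_def by fastforce
    from card_mono[OF _ this] have "d \<le> count_ge N w' M"
      using card_image[OF srv(2)] by (simp add: count_ge_def)
    then have "M \<le> ord_wl N w' i" using le_ord_wl_iff_count_ge[of i N M w'] i d by simp
    then show ?thesis using False by simp
  qed
  show ?thesis unfolding top_equal_def w'_def[symmetric]
  proof safe
    fix i assume i: "1 \<le> i" "i \<le> d"
    have "ord_wl N w' i \<le> ord_wl N w' 1" using ord_wl_antimono[of 1 i N w'] i d by simp
    then show "ord_wl N w' i = ord_wl N w' 1" using lower[OF i] upper by linarith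
  qed
qed

text \<open>The auxiliary system sends type-A jobs to the \<open>d\<close> top servers, which all carry
  the maximal workload.\<close>
lemma job_update_top_servers:
  assumes s: "sorts N w \<sigma>" and d: "1 \<le> d" "d \<le> N" and b: "\<forall>j<d. 0 \<le> b j"
    and top: "top_equal N d w" and j: "j < N"
  shows "job_update d \<sigma> b w (\<sigma> j)
       = (if j < d then ord_wl N w 1 + Min (b ` {..<d}) else w (\<sigma> j))"
proof -
  define m where "m = Min (b ` {..<d})"
  define a where "a = ord_wl N w 1"
  have top_a: "w (\<sigma> i) = a" if "i < d" for i
    using sorts_top_equal[OF s top that d(2)] unfolding a_def .
  have "m \<in> b ` {..<d}" unfolding m_def using d by (intro Min_in) (auto simp: lessThan_empty_iff)
  then obtain js where js: "js < d" "b js = m" by auto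
  have m: "0 \<le> m" "\<forall>i<d. m \<le> b i" using js b unfolding m_def by auto
  have "Min ((\<lambda>i. w (\<sigma> i) + b i) ` {..<d}) = a + m"
  proof (rule antisym)
    show "Min ((\<lambda>i. w (\<sigma> i) + b i) ` {..<d}) \<le> a + m"
      using job_update_Min_le[OF js(1), of w \<sigma> b] js(2) top_a[OF js(1)] by simp
    show "a + m \<le> Min ((\<lambda>i. w (\<sigma> i) + b i) ` {..<d})"
      using d top_a m(2) by (intro Min.boundedI) (auto simp: lessThan_empty_iff)
  qed
  moreover have "\<sigma> j \<in> \<sigma> ` {..<d} \<longleftrightarrow> j < d"
    using s j d unfolding sorts_def bij_betw_def by (auto dest: inj_onD)
  ultimately show ?thesis
    using job_update_in[of "\<sigma> j" \<sigma> d b w] job_update_notin[of "\<sigma> j" \<sigma> d b w] top_a[of j] m(1)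
    unfolding a_def m_def by auto
qed

lemma ord_wl_job_update_top:
  assumes s: "sorts N w \<sigma>" and d: "1 \<le> d" "d \<le> N" and b: "\<forall>j<d. 0 \<le> b j"
    and top: "top_equal N d w"
  shows "\<And>i. 1 \<le> i \<Longrightarrow> i \<le> d \<Longrightarrow>
           ord_wl N (job_update d \<sigma> b w) i = ord_wl N w 1 + Min (b ` {..<d})"
    and "\<And>i. d < i \<Longrightarrow> i \<le> N \<Longrightarrow> ord_wl N (job_update d \<sigma> b w) i = ord_wl N w i"
proof -
  define w' where "w' = job_update d \<sigma> b w"
  have w': "w' (\<sigma> j) = (if j < d then ord_wl N w 1 + Min (b ` {..<d}) else w (\<sigma> j))"
    if "j < N" for j
    using job_update_top_servers[OF s d b top that] unfolding w'_def .
  have "0 \<le> Min (b ` {..<d})" using b d by (intro Min.boundedI) (auto simp: lessThan_empty_iff)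
  have "w' (\<sigma> j) \<le> w' (\<sigma> i)" if ij: "i \<le> j" "j < N" for i j
  proof -
    have "w (\<sigma> j) \<le> w (\<sigma> i)" using s ij unfolding sorts_def by blast
    moreover have "i < d \<Longrightarrow> w (\<sigma> i) = ord_wl N w 1" using sorts_top_equal[OF s top _ d(2)] .
    ultimately show ?thesis using w'[of i] w'[of j] ij \<open>0 \<le> Min (b ` {..<d})\<close> by auto
  qed
  then have "sorts N w' \<sigma>" using s unfolding sorts_def by blast
  then have ord_w': "ord_wl N w' i = w' (\<sigma> (i - 1))" and ord_w: "ord_wl N w i = w (\<sigma> (i - 1))"
    if "1 \<le> i" "i \<le> N" for i
    using ord_wl_sorts[of N w' \<sigma> "i - 1"] ord_wl_sorts[OF s, of "i - 1"] that by simp_all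
  show "ord_wl N (job_update d \<sigma> b w) i = ord_wl N w 1 + Min (b ` {..<d})"
    if "1 \<le> i" "i \<le> d" for i
  proof -
    have "i - 1 < d" using that by linarith
    then show ?thesis using ord_w'[of i] w'[of "i - 1"] that d unfolding w'_def by simp
  qed
  show "ord_wl N (job_update d \<sigma> b w) i = ord_wl N w i" if "d < i" "i \<le> N" for i
  proof -
    have "\<not> i - 1 < d" using that by linarith
    then show ?thesis using ord_w'[of i] ord_w[of i] w'[of "i - 1"] that d unfolding w'_def by simp
  qed
qed

lemma coupled_job_update_top:
  assumes d: "1 \<le> d" "d \<le> N" and b: "\<forall>j<d. 0 \<le> b j"
    and srv: "\<forall>j<d. srv j < N" "inj_on srv {..<d}"
    and s: "sorts N w' \<sigma>" and c: "coupled N d w w'"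
  shows "coupled N d (job_update d srv b w) (job_update d \<sigma> b w')"
proof -
  let ?m = "Min (b ` {..<d})"
  let ?u = "job_update d srv b w" and ?u' = "job_update d \<sigma> b w'"
  have top_w: "top_equal N d w" using top_equal_if_gaps_le c d unfolding coupled_def by blast
  have top_u: "top_equal N d ?u" using top_equal_job_update[OF d srv top_w] .
  have top_u': "ord_wl N ?u' i = ord_wl N w' 1 + ?m" if "1 \<le> i" "i \<le> d" for i
    using ord_wl_job_update_top(1)[OF s d b _ that] c unfolding coupled_def by blast
  have rest_u': "ord_wl N ?u' i = ord_wl N w' i" if "d < i" "i \<le> N" for i
    using ord_wl_job_update_top(2)[OF s d b _ that] c unfolding coupled_def by blast
  have "gaps_le N ?u ?u'" unfolding gaps_le_def
  proof safe
    fix i assume i: "1 \<le> i" "i \<le> N"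
    show "ord_wl N ?u 1 - ord_wl N ?u i \<le> ord_wl N ?u' 1 - ord_wl N ?u' i"
    proof (cases "i \<le> d")
      case True
      then show ?thesis using top_equalD[OF top_u, of i] top_u'[of i] top_u'[of 1] i d by simp
    next
      case False
      have "ord_wl N w 1 - ord_wl N w i \<le> ord_wl N w' 1 - ord_wl N w' i"
        using c i unfolding coupled_def gaps_le_def by blast
      then show ?thesis
        using ord_wl_1_job_update_le[OF d(1) b srv(1), of w]
          ord_wl_job_update_ge[OF i, of w d srv b]
          top_u'[of 1] rest_u'[of i] i d False by simp
    qed
  qed
  moreover have "top_equal N d ?u'" using top_u' d unfolding top_equal_def by simp
  ultimately show ?thesis unfolding coupled_def ..
qed

definition lift_bottom :: "nat \<Rightarrow> state \<Rightarrow> nat \<Rightarrow> real \<Rightarrow> state" where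
  "lift_bottom N w p \<beta> = w(p := min (ord_wl N w 1) (ord_wl N w N + \<beta>))"

lemma le_lift_bottom:
  assumes "w p = ord_wl N w N" "1 \<le> N" "0 \<le> \<beta>"
  shows "w k \<le> lift_bottom N w p \<beta> k"
  using ord_wl_antimono[of 1 N N w] assms by (simp add: lift_bottom_def)

lemma lift_bottom_le_ord_wl_1:
  "k < N \<Longrightarrow> lift_bottom N w p \<beta> k \<le> ord_wl N w 1"
  using le_ord_wl_1[of k N w] by (simp add: lift_bottom_def)

lemma ord_wl_1_lift_bottom:
  assumes "p < N" "w p = ord_wl N w N" "0 \<le> \<beta>"
  shows "ord_wl N (lift_bottom N w p \<beta>) 1 = ord_wl N w 1"
proof (rule antisym)
  show "ord_wl N (lift_bottom N w p \<beta>) 1 \<le> ord_wl N w 1"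
    using ord_wl_le_bound[of N "lift_bottom N w p \<beta>" "ord_wl N w 1" 1]
      lift_bottom_le_ord_wl_1 assms(1)
    by simp
  show "ord_wl N w 1 \<le> ord_wl N (lift_bottom N w p \<beta>) 1"
    using assms by (intro ord_wl_mono) (simp_all add: le_lift_bottom)
qed

lemma top_equal_lift_bottom:
  assumes top: "top_equal N d w" and d: "d \<le> N"
    and p: "p < N" "w p = ord_wl N w N" and \<beta>: "0 \<le> \<beta>"
  shows "top_equal N d (lift_bottom N w p \<beta>)"
  unfolding top_equal_def
proof safe
  let ?u = "lift_bottom N w p \<beta>"
  fix i assume i: "1 \<le> i" "i \<le> d"
  have "ord_wl N w i \<le> ord_wl N ?u i"
    using p \<beta> i d by (intro ord_wl_mono) (simp_all add: le_lift_bottom)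
  moreover have "ord_wl N ?u i \<le> ord_wl N ?u 1" using ord_wl_antimono[of 1 i N ?u] i d by simp
  ultimately show "ord_wl N ?u i = ord_wl N ?u 1"
    using top_equalD[OF top i] ord_wl_1_lift_bottom[OF p \<beta>] by linarith
qed

lemma count_ge_lift_bottom:
  assumes p: "p < N" "w p = ord_wl N w N" and \<beta>: "0 \<le> \<beta>"
  shows "count_ge N (lift_bottom N w p \<beta>) v =
    (if v \<le> ord_wl N w N then N
     else count_ge N w v + (if v \<le> min (ord_wl N w 1) (ord_wl N w N + \<beta>) then 1 else 0))"
proof (cases "v \<le> ord_wl N w N")
  case True
  have "v \<le> lift_bottom N w p \<beta> k" if "k < N" for k
    using ord_wl_N_le[OF that, of w] le_lift_bottom[OF p(2) _ \<beta>, of k] True p(1) by linarith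
  then have "{k. k < N \<and> v \<le> lift_bottom N w p \<beta> k} = {..<N}" by auto
  then show ?thesis using True by (simp add: count_ge_def)
next
  case False
  then show ?thesis
    using count_ge_fun_upd[OF p(1), of w "min (ord_wl N w 1) (ord_wl N w N + \<beta>)" v] p(2)
    by (simp add: lift_bottom_def)
qed

text \<open>The lift does not change the top workloads, so the level counts of both systems
  can be compared with the same shift.\<close>
lemma gaps_le_lift_bottom:
  assumes g: "gaps_le N w w'" and p: "p < N" "w p = ord_wl N w N"
    and p': "p' < N" "w' p' = ord_wl N w' N" and \<beta>: "0 \<le> \<beta>"
  shows "gaps_le N (lift_bottom N w p \<beta>) (lift_bottom N w' p' \<beta>)"
proof -
  define \<delta> where "\<delta> = ord_wl N w' 1 - ord_wl N w 1"
  have N: "1 \<le> N" using p by simp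
  have count: "count_ge N w' (v + \<delta>) \<le> count_ge N w v" for v
    using g unfolding gaps_le_iff_count_ge \<delta>_def by blast
  have "ord_wl N w' N - \<delta> \<le> ord_wl N w N"
    using g N unfolding gaps_le_def \<delta>_def by fastforce
  then have "count_ge N (lift_bottom N w' p' \<beta>) (v + \<delta>)
      \<le> count_ge N (lift_bottom N w p \<beta>) v" for v
    using count_ge_lift_bottom[OF p \<beta>, of v] count_ge_lift_bottom[OF p' \<beta>, of "v + \<delta>"]
      count[of v] count_ge_le[of N "lift_bottom N w' p' \<beta>" "v + \<delta>"]
    unfolding \<delta>_def by (auto split: if_splits)
  moreover have "ord_wl N (lift_bottom N w' p' \<beta>) 1 - ord_wl N (lift_bottom N w p \<beta>) 1 = \<delta>"
    using ord_wl_1_lift_bottom[OF p \<beta>] ord_wl_1_lift_bottom[OF p' \<beta>] unfolding \<delta>_def by simp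
  ultimately show ?thesis unfolding gaps_le_iff_count_ge by simp
qed

lemma coupled_lift_bottom:
  assumes "coupled N d w w'" "d \<le> N" "p < N" "w p = ord_wl N w N"
    and "p' < N" "w' p' = ord_wl N w' N" "0 \<le> \<beta>"
  shows "coupled N d (lift_bottom N w p \<beta>) (lift_bottom N w' p' \<beta>)"
  using assms gaps_le_lift_bottom top_equal_lift_bottom unfolding coupled_def by blast

lemma job_update_eq_fun_upd:
  assumes p: "p \<in> srv ` {..<d}"
    and le_p: "w p \<le> Min ((\<lambda>j. w (srv j) + b j) ` {..<d})"
    and ge_others: "\<And>k. k \<in> srv ` {..<d} \<Longrightarrow> k \<noteq> p \<Longrightarrow>
      Min ((\<lambda>j. w (srv j) + b j) ` {..<d}) \<le> w k"
  shows "job_update d srv b w = w(p := Min ((\<lambda>j. w (srv j) + b j) ` {..<d}))"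
proof
  fix k
  show "job_update d srv b w k = (w(p := Min ((\<lambda>j. w (srv j) + b j) ` {..<d}))) k"
  proof (cases "k \<in> srv ` {..<d}")
    case True
    then show ?thesis using job_update_in[OF True] le_p ge_others[OF True] by (auto simp: max_def)
  next
    case False
    then show ?thesis using job_update_notin[OF False] p by auto
  qed
qed

text \<open>For a type-B1 job, the replica with requirement 0 at one of the top d - 1 servers,
  which carry the maximal workload, caps the new workload at \<omega>_(1), so only the bottom
  server changes.\<close>
lemma job_update_eq_lift_bottom:
  assumes s: "sorts N w \<sigma>" and top: "top_equal N d w" and d: "1 \<le> d" "d \<le> N"
    and b: "\<forall>j<d. 0 \<le> b j" and inj: "inj_on rr {..<d}"
    and img: "rr ` {..<d} = insert (N - 1) {..<d - 1}"
    and j0: "j0 < d" "b j0 = 0" "rr j0 \<noteq> N - 1" and jb: "jb < d" "rr jb = N - 1"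
  shows "job_update d (\<lambda>j. \<sigma> (rr j)) b w = lift_bottom N w (\<sigma> (N - 1)) (b jb)"
proof -
  define a where "a = ord_wl N w 1"
  define c where "c = ord_wl N w N"
  define M where "M = Min ((\<lambda>j. w (\<sigma> (rr j)) + b j) ` {..<d})"
  have ranks: "rr j < d - 1" if "j < d" "j \<noteq> jb" for j
  proof -
    have "rr j \<noteq> N - 1" using inj jb that by (metis inj_onD lessThan_iff)
    moreover have "rr j \<in> insert (N - 1) {..<d - 1}" using img that by blast
    ultimately show ?thesis by simp
  qed
  have top_a: "w (\<sigma> (rr j)) = a" if "j < d" "j \<noteq> jb" for j
  proof -
    have "rr j < d" using ranks[OF that] by simp
    then show ?thesis using sorts_top_equal[OF s top _ d(2)] unfolding a_def by blast
  qed
  have bottom: "\<sigma> (N - 1) < N" "w (\<sigma> (N - 1)) = c"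
    using sorts_last[OF s] d unfolding c_def by simp_all
  have "c \<le> a" unfolding a_def c_def using ord_wl_antimono[of 1 N N w] d by simp
  have "j0 \<noteq> jb" using j0(3) jb(2) by auto
  have M: "M = min a (c + b jb)"
  proof (rule antisym)
    have "M \<le> a"
      using job_update_Min_le[OF j0(1), of w "\<lambda>j. \<sigma> (rr j)" b] j0(1,2) top_a \<open>j0 \<noteq> jb\<close>
      unfolding M_def by simp
    moreover have "M \<le> c + b jb"
      using job_update_Min_le[OF jb(1), of w "\<lambda>j. \<sigma> (rr j)" b] jb(2) bottom unfolding M_def by simp
    ultimately show "M \<le> min a (c + b jb)" by simp
    have "min a (c + b jb) \<le> w (\<sigma> (rr j)) + b j" if "j < d" for j
      using top_a[OF that] b that jb(2) bottom by (cases "j = jb") (auto simp: min_le_iff_disj)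
    then show "min a (c + b jb) \<le> M"
      unfolding M_def using d by (intro Min.boundedI) (auto simp: lessThan_empty_iff)
  qed
  have "job_update d (\<lambda>j. \<sigma> (rr j)) b w = w(\<sigma> (N - 1) := M)"
    unfolding M_def
  proof (rule job_update_eq_fun_upd)
    show "\<sigma> (N - 1) \<in> (\<lambda>j. \<sigma> (rr j)) ` {..<d}" using jb by (metis image_eqI lessThan_iff)
    show "w (\<sigma> (N - 1)) \<le> Min ((\<lambda>j. w (\<sigma> (rr j)) + b j) ` {..<d})"
      using M bottom \<open>c \<le> a\<close> b jb(1) unfolding M_def by simp
    fix k assume k: "k \<in> (\<lambda>j. \<sigma> (rr j)) ` {..<d}" "k \<noteq> \<sigma> (N - 1)"
    then obtain j where j: "j < d" "k = \<sigma> (rr j)" by auto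
    moreover from j k(2) jb(2) have "j \<noteq> jb" by auto
    ultimately show "Min ((\<lambda>j. w (\<sigma> (rr j)) + b j) ` {..<d}) \<le> w k"
      using M top_a unfolding M_def by simp
  qed
  then show ?thesis using M unfolding lift_bottom_def a_def c_def by simp
qed

lemma coupled_job_update_bottom:
  assumes c: "coupled N d w w'" and s: "sorts N w \<sigma>" and s': "sorts N w' \<sigma>'"
    and d: "1 \<le> d" "d \<le> N" and b: "\<forall>j<d. 0 \<le> b j" and inj: "inj_on rr {..<d}"
    and img: "rr ` {..<d} = insert (N - 1) {..<d - 1}"
    and j0: "j0 < d" "b j0 = 0" "rr j0 \<noteq> N - 1"
  shows "coupled N d (job_update d (\<lambda>j. \<sigma> (rr j)) b w) (job_update d (\<lambda>j. \<sigma>' (rr j)) b w')"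
proof -
  obtain jb where jb: "jb < d" "rr jb = N - 1" using img by (metis imageE insertI1 lessThan_iff)
  have top: "top_equal N d w" "top_equal N d w'"
    using c top_equal_if_gaps_le d(2) unfolding coupled_def by blast+
  have "N \<ge> 1" using d by simp
  then show ?thesis
    using job_update_eq_lift_bottom[OF s top(1) d b inj img j0 jb]
      job_update_eq_lift_bottom[OF s' top(2) d b inj img j0 jb]
      coupled_lift_bottom[OF c d(2) sorts_last[OF s] sorts_last[OF s'], of "b jb"] b jb(1)
    by simp
qed

lemma coupled_jump:
  assumes d: "1 \<le> d" "d \<le> N" and K: "0 \<le> K" and x: "\<forall>j<d. 0 < x n j"
    and r: "inj_on (r n) {..<d}" "r n ` {..<d} \<subseteq> {..<N}"
    and s: "sorts N w \<sigma>" and s': "sorts N w' \<sigma>'" and c: "coupled N d w w'"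
  shows "coupled N d (orig_jump d K z x r n \<sigma> w) (aux_jump N d K z x r n \<sigma>' w')"
proof -
  define b where "b = req K z x n"
  have b: "\<forall>j<d. 0 \<le> b j" using x K by (auto simp: b_def req_def)
  have \<sigma>: "bij_betw \<sigma> {..<N} {..<N}" using s by (simp add: sorts_def)
  then have srv: "\<forall>j<d. \<sigma> (r n j) < N" using r(2) unfolding bij_betw_def by blast
  have orig: "orig_jump d K z x r n \<sigma> w = job_update d (\<lambda>j. \<sigma> (r n j)) b w"
    by (simp add: orig_jump_def b_def)
  have zero_req: "\<exists>j0<d. z n j0 \<and> b j0 = 0" if "\<not> typeA d z n"
    using that by (auto simp: typeA_def b_def req_def)
  consider (A) "typeA d z n" | (B1) "\<not> typeA d z n" "typeB1 N d z r n"
    | (C) "\<not> typeA d z n" "typeC d z n"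
    | (other) "\<not> typeA d z n" "\<not> typeB1 N d z r n" "\<not> typeC d z n"
    by blast
  then show ?thesis
  proof cases
    case A
    have "inj_on \<sigma> (r n ` {..<d})" using \<sigma> r(2) unfolding bij_betw_def
      by (blast intro: inj_on_subset)
    then have inj: "inj_on (\<lambda>j. \<sigma> (r n j)) {..<d}" using comp_inj_on[OF r(1)]
      by (simp add: comp_def)
    show ?thesis
      using coupled_job_update_top[OF d b srv inj s' c] A orig by (simp add: aux_jump_def b_def)
  next
    case B1
    then obtain j0 where j0: "j0 < d" "z n j0" "b j0 = 0" using zero_req by blast
    then have "r n j0 \<noteq> N - 1" using B1(2) unfolding typeB1_def by blast
    then show ?thesis
      using coupled_job_update_bottom[OF c s s' d b r(1) _ j0(1,3)] B1 orig
      by (simp add: aux_jump_def typeB1_def b_def)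
  next
    case C
    then have "\<forall>j<d. b j = 0" by (simp add: typeC_def b_def req_def)
    then show ?thesis using c C orig by (simp add: aux_jump_def job_update_zero_req b_def)
  next
    case other
    then obtain j0 where "j0 < d" "b j0 = 0" using zero_req by blast
    then show ?thesis
      using coupled_job_update_zero_req[OF c _ _ srv] other orig by (simp add: aux_jump_def)
  qed
qed

lemma traj_invariant:
  assumes start: "P w0 w0'"
    and flow: "\<And>s w w'. P w w' \<Longrightarrow> P (fl s w) (fl' s w')"
    and jump: "\<And>n. P (pre fl jp T \<sigma> w0 n) (pre fl' jp' T \<sigma>' w0' n) \<Longrightarrow>
      P (jp n (\<sigma> n) (pre fl jp T \<sigma> w0 n)) (jp' n (\<sigma>' n) (pre fl' jp' T \<sigma>' w0' n))"
  shows "P (traj fl jp T \<sigma> w0 t) (traj fl' jp' T \<sigma>' w0' t)"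
proof -
  have post: "P (post fl jp T \<sigma> w0 n) (post fl' jp' T \<sigma>' w0' n)" for n
  proof (induction n)
    case 0
    show ?case using jump[of 0] flow[OF start] by (simp add: pre_def)
  next
    case (Suc n)
    show ?case using jump[of "Suc n"] flow[OF Suc.IH] by (simp add: pre_def)
  qed
  show ?thesis using flow[OF start] flow[OF post] by (simp add: traj_def Let_def)
qed

theorem lemma2:
  fixes N d :: nat and K :: real and T :: "nat \<Rightarrow> real"
    and z :: "nat \<Rightarrow> nat \<Rightarrow> bool" and x :: "nat \<Rightarrow> nat \<Rightarrow> real"
    and r :: "nat \<Rightarrow> nat \<Rightarrow> nat" and \<sigma> \<sigma>a :: "nat \<Rightarrow> nat \<Rightarrow> nat"
    and w0 :: state and t :: real and i :: nat
  assumes "1 \<le> d" and "d \<le> N" and "1 \<le> K"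
    and "strict_mono T" and "0 < T 0" and "filterlim T at_top sequentially"
    and "\<forall>n j. j < d \<longrightarrow> 0 < x n j"
    and "\<forall>n. inj_on (r n) {..<d} \<and> r n ` {..<d} \<subseteq> {..<N}"
    and "\<forall>k<N. 0 \<le> w0 k"
    and "\<forall>j\<in>{1..d}. ord_wl N w0 j = ord_wl N w0 1"
    and "\<forall>n. sorts N (pre drain (orig_jump d K z x r) T \<sigma> w0 n) (\<sigma> n)"
    and "\<forall>n. sorts N (pre (aux_drain N) (aux_jump N d K z x r) T \<sigma>a w0 n) (\<sigma>a n)"
    and "0 \<le> t" and "1 \<le> i" and "i \<le> N"
  shows "ord_wl N (traj (aux_drain N) (aux_jump N d K z x r) T \<sigma>a w0 t) 1
           - ord_wl N (traj (aux_drain N) (aux_jump N d K z x r) T \<sigma>a w0 t) i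
         \<ge> ord_wl N (traj drain (orig_jump d K z x r) T \<sigma> w0 t) 1
           - ord_wl N (traj drain (orig_jump d K z x r) T \<sigma> w0 t) i"
proof -
  let ?jo = "orig_jump d K z x r" and ?ja = "aux_jump N d K z x r"
  have "top_equal N d w0" unfolding top_equal_def using assms(10) atLeastAtMost_iff by blast
  then have "coupled N d w0 w0" unfolding coupled_def gaps_le_def by simp
  moreover have "coupled N d (drain s w) (aux_drain N s w')" if "coupled N d w w'" for s w w'
    using coupled_drain[OF that assms(2)] .
  moreover have "coupled N d (?jo n (\<sigma> n) (pre drain ?jo T \<sigma> w0 n))
      (?ja n (\<sigma>a n) (pre (aux_drain N) ?ja T \<sigma>a w0 n))"
    if "coupled N d (pre drain ?jo T \<sigma> w0 n) (pre (aux_drain N) ?ja T \<sigma>a w0 n)" for n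
    using coupled_jump[OF assms(1,2) _ _ _ _ assms(11)[rule_format] assms(12)[rule_format] that]
      assms(3,7,8) by simp
  ultimately have "coupled N d (traj drain ?jo T \<sigma> w0 t) (traj (aux_drain N) ?ja T \<sigma>a w0 t)"
    by (rule traj_invariant[where P = "coupled N d"])
  then show ?thesis using assms(14,15) unfolding coupled_def gaps_le_def by blast
qed

end
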